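(* Suppose $\xi$ is an $\mathcal{S}$-shrinking point of the map $f$, where $\mathcal{S}=\mathcal{F}[\ell,m,n]$, and let $\{y_i\}$ be the $\mathcal{S}^{\overline0}$-cycle. Then (i) $\{y_i\}$ is both an $\mathcal{S}$-cycle and an $\mathcal{S}^{(-d)}$-cycle; (ii) $I-M_{\mathcal{S}}$ is singular; (iii) $P_{\mathcal{S}^{(i)}}$ is singular for all $i$.
   Context: Fix $N\ge2$. For $\mu\in\mathbb{R}$ and a parameter $\xi$, let $f:\mathbb{R}^N\to\mathbb{R}^N$, $f(x)=A_Lx+B\mu$ if $e_1^{\mathsf T}x\le0$, $f(x)=A_Rx+B\mu$ if $e_1^{\mathsf T}x\ge0$, with $A_L,A_R$ real $N\times N$ matrices, $B\in\mathbb{R}^N$ (depending on $\xi$), and $A_R=A_L+Ce_1^{\mathsf T}$ for some $C\in\mathbb{R}^N$. $f^L(x)=A_Lx+B\mu$, $f^R(x)=A_Rx+B\mu$, $\varrho^{\mathsf T}=e_1^{\mathsf T}\mathrm{adj}(I-A_L)$. A periodic sequence $\mathcal{S}:\mathbb{Z}\to\{L,R\}$ of period $n$ is identified with $\mathcal{S}_0\cdots\mathcal{S}_{n-1}$; indices mod $n$; $\mathcal{S}^{(j)}_i=\mathcal{S}_{i+j}$; $\mathcal{S}^{\overline j}$ differs from $\mathcal{S}$ exactly at indices $\equiv j$. $M_{\mathcal{S}}=A_{\mathcal{S}_{n-1}}\cdots A_{\mathcal{S}_0}$, $P_{\mathcal{S}}=I+A_{\mathcal{S}_{n-1}}+A_{\mathcal{S}_{n-1}}A_{\mathcal{S}_{n-2}}+\cdots+A_{\mathcal{S}_{n-1}}\cdots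 A_{\mathcal{S}_1}$. An $\mathcal{S}$-cycle is $(x_0,\dots,x_{n-1})$ with $x_{(i+1)\bmod n}=f^{\mathcal{S}_i}(x_i)$ for all $i$ (indices of the cycle mod $n$); it is admissible if $e_1^{\mathsf T}x_i\le0$ whenever $\mathcal{S}_i=L$ and $\ge0$ whenever $\mathcal{S}_i=R$. For positive integers $\ell<n$, $m<n$, $\gcd(m,n)=1$: $\mathcal{F}[\ell,m,n]_i=L$ if $im\bmod n<\ell$, $R$ otherwise; $d$ is the inverse of $m$ mod $n$. Definition: with $\mu\ne0$, $\varrho^{\mathsf T}B\ne0$, $\mathcal{S}=\mathcal{F}[\ell,m,n]$, $2\le\ell\le n-2$, $\xi$ is an $\mathcal{S}$-shrinking point if $\det(I-M_{\mathcal{S}^{\overline0}})\ne0$, $\det(I-M_{\mathcal{S}^{\overline{\ell d}}})\ne0$, the (unique) $\mathcal{S}^{\overline0}$-cycle is admissible, and its first coordinates $e_1^{\mathsf T}x_i$ vanish exactly for $i\equiv0$ and $i\equiv\ell d\pmod n$. *)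

theory Defs
  imports "Jordan_Normal_Form.Determinant"
begin

text \<open>Piecewise-linear continuous map on R^N (vectors of dimension N, coordinate 0 is e_1).\<close>

datatype side = L | R

fun swap_side :: "side \<Rightarrow> side" where
  "swap_side L = R" | "swap_side R = L"

definition e1 :: "nat \<Rightarrow> real vec" where
  "e1 N = unit_vec N 0"

definition outer :: "real vec \<Rightarrow> real vec \<Rightarrow> real mat" where
  "outer u v = mat (dim_vec u) (dim_vec v) (\<lambda>(i,j). u $ i * v $ j)"

definition Amat :: "real mat \<Rightarrow> real vec \<Rightarrow> nat \<Rightarrow> side \<Rightarrow> real mat" where
  "Amat AL C N s = (if s = L then AL else AL + outer C (e1 N))"

definition fpiece :: "real mat \<Rightarrow> real vec \<Rightarrow> real vec \<Rightarrow> real \<Rightarrow> nat \<Rightarrow> side \<Rightarrow> real vec \<Rightarrow> real vec" where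
  "fpiece AL C B \<mu> N s x = Amat AL C N s *\<^sub>v x + \<mu> \<cdot>\<^sub>v B"

definition rhoT :: "real mat \<Rightarrow> nat \<Rightarrow> real vec" where
  "rhoT AL N = row (adj_mat (1\<^sub>m N - AL)) 0"

text \<open>Symbol sequences Z -> {L,R}; shift S^(j) and flip S^{bar j} (period n).\<close>
type_synonym symseq = "int \<Rightarrow> side"

definition shiftS :: "symseq \<Rightarrow> int \<Rightarrow> symseq" where
  "shiftS S j = (\<lambda>i. S (i + j))"

definition flipS :: "symseq \<Rightarrow> nat \<Rightarrow> int \<Rightarrow> symseq" where
  "flipS S n j = (\<lambda>i. if i mod int n = j mod int n then swap_side (S i) else S i)"

definition Fseq :: "nat \<Rightarrow> nat \<Rightarrow> nat \<Rightarrow> symseq" where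
  "Fseq l m n = (\<lambda>i. if (i * int m) mod int n < int l then L else R)"

definition inv_mod :: "nat \<Rightarrow> nat \<Rightarrow> nat" where
  "inv_mod m n = (SOME d. d < n \<and> (d * m) mod n = 1)"

fun Mprod :: "real mat \<Rightarrow> real vec \<Rightarrow> nat \<Rightarrow> symseq \<Rightarrow> nat \<Rightarrow> real mat" where
  "Mprod AL C N S 0 = 1\<^sub>m N"
| "Mprod AL C N S (Suc k) = Amat AL C N (S (int k)) * Mprod AL C N S k"

definition Mmat :: "real mat \<Rightarrow> real vec \<Rightarrow> nat \<Rightarrow> symseq \<Rightarrow> nat \<Rightarrow> real mat" where
  "Mmat AL C N S n = Mprod AL C N S n"

fun Ptop :: "real mat \<Rightarrow> real vec \<Rightarrow> nat \<Rightarrow> symseq \<Rightarrow> nat \<Rightarrow> nat \<Rightarrow> real mat" where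
  "Ptop AL C N S n 0 = 1\<^sub>m N"
| "Ptop AL C N S n (Suc k) = Ptop AL C N S n k * Amat AL C N (S (int n - 1 - int k))"

fun Psum :: "real mat \<Rightarrow> real vec \<Rightarrow> nat \<Rightarrow> symseq \<Rightarrow> nat \<Rightarrow> nat \<Rightarrow> real mat" where
  "Psum AL C N S n 0 = 0\<^sub>m N N"
| "Psum AL C N S n (Suc k) = Psum AL C N S n k + Ptop AL C N S n k"

text \<open>P_S = I + A_{S_{n-1}} + ... + A_{S_{n-1}} ... A_{S_1}\<close>
definition Pmat :: "real mat \<Rightarrow> real vec \<Rightarrow> nat \<Rightarrow> symseq \<Rightarrow> nat \<Rightarrow> real mat" where
  "Pmat AL C N S n = Psum AL C N S n n"

definition is_cycle :: "real mat \<Rightarrow> real vec \<Rightarrow> real vec \<Rightarrow> real \<Rightarrow> nat \<Rightarrow> symseq \<Rightarrow> nat \<Rightarrow> (nat \<Rightarrow> real vec) \<Rightarrow> bool" where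
  "is_cycle AL C B \<mu> N S n x \<longleftrightarrow>
     (\<forall>i<n. x i \<in> carrier_vec N) \<and>
     (\<forall>i<n. x ((i + 1) mod n) = fpiece AL C B \<mu> N (S (int i)) (x i))"

definition admissible :: "symseq \<Rightarrow> nat \<Rightarrow> (nat \<Rightarrow> real vec) \<Rightarrow> bool" where
  "admissible S n x \<longleftrightarrow>
     (\<forall>i<n. (S (int i) = L \<longrightarrow> x i $ 0 \<le> 0) \<and> (S (int i) = R \<longrightarrow> x i $ 0 \<ge> 0))"

definition shrinking_point :: "real mat \<Rightarrow> real vec \<Rightarrow> real vec \<Rightarrow> real \<Rightarrow> nat \<Rightarrow> nat \<Rightarrow> nat \<Rightarrow> nat \<Rightarrow> bool" where
  "shrinking_point AL C B \<mu> N l m n \<longleftrightarrow>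
     (let S = Fseq l m n; d = inv_mod m n in
      0 < m \<and> m < n \<and> coprime m n \<and> 2 \<le> l \<and> l + 2 \<le> n \<and>
      \<mu> \<noteq> 0 \<and> rhoT AL N \<bullet> B \<noteq> 0 \<and>
      det (1\<^sub>m N - Mmat AL C N (flipS S n 0) n) \<noteq> 0 \<and>
      det (1\<^sub>m N - Mmat AL C N (flipS S n (int (l * d))) n) \<noteq> 0 \<and>
      (\<exists>y. is_cycle AL C B \<mu> N (flipS S n 0) n y \<and>
           admissible (flipS S n 0) n y \<and>
           (\<forall>i<n. y i $ 0 = 0 \<longleftrightarrow> (i mod n = 0 \<or> i mod n = (l * d) mod n))))"

end

theory Submission
  imports Defs
begin

text \<open>Let \<open>S'\<close> be \<open>S\<close> flipped at \<open>0\<close>. Its cycle \<open>y\<close> lies on the switching manifold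
  \<open>x $ 0 = 0\<close> exactly at the indices \<open>0\<close> and \<open>\<ell> d\<close>, which are exactly the indices where \<open>S'\<close>
  differs from \<open>S\<close> and from \<open>S\<close> shifted by \<open>-d\<close>; both pieces of \<open>f\<close> agree on the switching
  manifold, so \<open>y\<close> is a cycle of both sequences. Rotating the second cycle by \<open>d\<close> gives another
  \<open>S\<close>-cycle, and it differs from \<open>y\<close> because \<open>d\<close> generates \<open>\<int>/n\<close> while \<open>y\<close> meets the
  switching manifold only twice. Two distinct \<open>S\<close>-cycles force \<open>I - M\<^sub>S\<close> to be singular.

  Every \<open>S\<close>-cycle satisfies \<open>(I - M\<^sub>S) x\<^sub>0 = P\<^sub>S \<mu> B\<close>, and on the switching manifold
  \<open>I - M\<^sub>S = P\<^sub>S (I - A\<^sub>L)\<close>. So if \<open>P\<^sub>S\<close> were invertible, \<open>X = P\<^sub>S\<inverse> (I - M\<^sub>S)\<close> would be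
  singular, map \<open>x\<^sub>0\<close> to \<open>\<mu> B\<close> and agree with \<open>I - A\<^sub>L\<close> off the first column, hence have
  \<open>\<rho>\<^sup>T\<close> as the first row of its adjugate: \<open>0 = \<rho>\<^sup>T X x\<^sub>0 = \<mu> \<rho>\<^sup>T B\<close>, a contradiction.
  Rotating both cycles gives the same for every shift of \<open>S\<close>.\<close>

lemma outer_mult_vec:
  assumes "u \<in> carrier_vec N" "v \<in> carrier_vec N" "x \<in> carrier_vec N"
  shows "outer u v *\<^sub>v x = (v \<bullet> x) \<cdot>\<^sub>v u"
proof (rule eq_vecI)
  fix i assume i: "i < dim_vec ((v \<bullet> x) \<cdot>\<^sub>v u)"
  have "(outer u v *\<^sub>v x) $ i = (\<Sum>j<N. u $ i * v $ j * x $ j)"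
    using assms i unfolding outer_def by (auto simp: scalar_prod_def atLeast0LessThan)
  also have "\<dots> = u $ i * (\<Sum>j<N. v $ j * x $ j)"
    by (simp add: sum_distrib_left mult.assoc)
  finally show "(outer u v *\<^sub>v x) $ i = ((v \<bullet> x) \<cdot>\<^sub>v u) $ i"
    using assms i by (simp add: scalar_prod_def atLeast0LessThan mult.commute)
qed (use assms in \<open>auto simp: outer_def\<close>)

lemma zero_mat_mult_vec [simp]: "v \<in> carrier_vec nc \<Longrightarrow> 0\<^sub>m nr nc *\<^sub>v v = 0\<^sub>v nr"
  by (intro eq_vecI) (auto simp: scalar_prod_def)

lemma add_minus_cancel_vec: "u \<in> carrier_vec n \<Longrightarrow> w \<in> carrier_vec n \<Longrightarrow> u + w - u = (w :: 'a :: ab_group_add vec)"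
  by (intro eq_vecI) auto

lemma add_mat_right_commute:
  "A \<in> carrier_mat nr nc \<Longrightarrow> B \<in> carrier_mat nr nc \<Longrightarrow> D \<in> carrier_mat nr nc \<Longrightarrow>
    A + D + B = A + B + (D :: 'a :: ab_semigroup_add mat)"
  by (rule eq_matI) (auto simp: ac_simps)

lemma adj_mat_left_inverse:
  fixes P :: "real mat"
  assumes "P \<in> carrier_mat N N" "det P \<noteq> 0"
  shows "((1 / det P) \<cdot>\<^sub>m adj_mat P) * P = 1\<^sub>m N"
proof -
  have "((1 / det P) \<cdot>\<^sub>m adj_mat P) * P = (1 / det P) \<cdot>\<^sub>m (adj_mat P * P)"
    using adj_mat(1)[OF assms(1)] assms(1) by (rule mult_smult_assoc_mat)
  also have "\<dots> = 1\<^sub>m N"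
    unfolding adj_mat(3)[OF assms(1)] using assms(2) by (intro eq_matI) auto
  finally show ?thesis .
qed

text \<open>The first row of the adjugate consists of the cofactors of the first column.\<close>
lemma row_adj_mat_0_eqI:
  fixes X Y :: "real mat"
  assumes X: "X \<in> carrier_mat N N" and Y: "Y \<in> carrier_mat N N" and N: "0 < N"
    and agree: "\<And>v. v \<in> carrier_vec N \<Longrightarrow> v $ 0 = 0 \<Longrightarrow> X *\<^sub>v v = Y *\<^sub>v v"
  shows "row (adj_mat X) 0 = row (adj_mat Y) 0"
proof -
  have col: "X $$ (i, j) = Y $$ (i, j)" if "i < N" "0 < j" "j < N" for i j
  proof -
    have "X $$ (i, j) = (X *\<^sub>v unit_vec N j) $ i" using X that by simp
    also have "\<dots> = (Y *\<^sub>v unit_vec N j) $ i" using agree[of "unit_vec N j"] that by simp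
    also have "\<dots> = Y $$ (i, j)" using Y that by simp
    finally show ?thesis .
  qed
  show ?thesis
  proof (rule eq_vecI)
    fix j assume "j < dim_vec (row (adj_mat Y) 0)"
    then have j: "j < N" using adj_mat(1)[OF Y] by auto
    have "mat_delete X j 0 = mat_delete Y j 0"
      unfolding mat_delete_def using X Y by (intro eq_matI) (auto intro!: col)
    then show "row (adj_mat X) 0 $ j = row (adj_mat Y) 0 $ j"
      using X Y j N unfolding adj_mat_def cofactor_def by simp
  qed (use adj_mat(1)[OF X] adj_mat(1)[OF Y] in auto)
qed

lemma row_adj_mat_scalar_prod_singular:
  fixes X :: "real mat"
  assumes X: "X \<in> carrier_mat N N" and "det X = 0" and x: "x \<in> carrier_vec N" and "i < N"
  shows "row (adj_mat X) i \<bullet> (X *\<^sub>v x) = 0"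
proof -
  have "row (adj_mat X) i \<bullet> (X *\<^sub>v x) = (adj_mat X *\<^sub>v (X *\<^sub>v x)) $ i"
    using adj_mat(1)[OF X] \<open>i < N\<close> by simp
  also have "\<dots> = ((adj_mat X * X) *\<^sub>v x) $ i"
    using adj_mat(1)[OF X] X x by simp
  also have "\<dots> = 0"
    unfolding adj_mat(3)[OF X] \<open>det X = 0\<close> using x \<open>i < N\<close> by simp
  finally show ?thesis .
qed

section \<open>Cycles of piecewise-linear maps\<close>

lemma is_cycle_carrier: "is_cycle AL C B \<mu> N S n x \<Longrightarrow> i < n \<Longrightarrow> x i \<in> carrier_vec N"
  unfolding is_cycle_def by blast

locale pwl_map =
  fixes AL :: "real mat" and C B :: "real vec" and N :: nat
  assumes AL_carrier: "AL \<in> carrier_mat N N"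
    and C_carrier: "C \<in> carrier_vec N"
    and B_carrier: "B \<in> carrier_vec N"
    and N_pos: "0 < N"
begin

declare mult_mat_vec_carrier[of _ N N, simp] mult_carrier_mat[of _ N N _ N, simp]
  assoc_mult_mat_vec[of _ N N _ N, simp]

lemma Amat_carrier [simp]: "Amat AL C N s \<in> carrier_mat N N"
  using AL_carrier C_carrier unfolding Amat_def outer_def e1_def by auto

lemma Mprod_carrier [simp]: "Mprod AL C N S k \<in> carrier_mat N N"
  by (induction k) auto

lemma Ptop_carrier [simp]: "Ptop AL C N S t k \<in> carrier_mat N N"
  by (induction k) auto

lemma Psum_carrier [simp]: "Psum AL C N S t k \<in> carrier_mat N N"
  by (induction k) auto

lemma Amat_mult_vec_switching:
  assumes v: "v \<in> carrier_vec N" and "v $ 0 = 0"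
  shows "Amat AL C N s *\<^sub>v v = AL *\<^sub>v v"
proof (cases s)
  case R
  have "outer C (e1 N) *\<^sub>v v = 0 \<cdot>\<^sub>v C"
    using assms C_carrier N_pos by (simp add: outer_mult_vec[of _ N] e1_def)
  also have "\<dots> = 0\<^sub>v N"
    using C_carrier by (intro eq_vecI) auto
  finally have "outer C (e1 N) *\<^sub>v v = 0\<^sub>v N" .
  then show ?thesis
    using R v AL_carrier C_carrier
    by (simp add: Amat_def add_mult_distrib_mat_vec[of _ N N] outer_def e1_def)
qed (simp add: Amat_def)

lemma fpiece_switching:
  assumes "x \<in> carrier_vec N" and "x $ 0 = 0"
  shows "fpiece AL C B \<mu> N s x = fpiece AL C B \<mu> N s' x"
  unfolding fpiece_def using Amat_mult_vec_switching[OF assms] by simp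

lemma is_cycle_change_symbols:
  assumes cyc: "is_cycle AL C B \<mu> N S n x"
    and switching: "\<And>i. i < n \<Longrightarrow> S' (int i) \<noteq> S (int i) \<Longrightarrow> x i $ 0 = 0"
  shows "is_cycle AL C B \<mu> N S' n x"
  unfolding is_cycle_def
proof (intro conjI allI impI)
  fix i assume i: "i < n"
  show "x i \<in> carrier_vec N" using is_cycle_carrier[OF cyc i] .
  then have "fpiece AL C B \<mu> N (S' (int i)) (x i) = fpiece AL C B \<mu> N (S (int i)) (x i)"
    using switching[OF i] fpiece_switching by metis
  then show "x ((i + 1) mod n) = fpiece AL C B \<mu> N (S' (int i)) (x i)"
    using cyc i unfolding is_cycle_def by auto
qed

lemma Ptop_Suc_Suc:
  "Ptop AL C N S (Suc t) (Suc j) = Amat AL C N (S (int t)) * Ptop AL C N S t j"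
proof (induction j)
  case (Suc j)
  have "int (Suc t) - 1 - int (Suc j) = int t - 1 - int j" by simp
  then have "Ptop AL C N S (Suc t) (Suc (Suc j))
      = Amat AL C N (S (int t)) * Ptop AL C N S t j * Amat AL C N (S (int t - 1 - int j))"
    using Suc by (simp only: Ptop.simps)
  also have "\<dots> = Amat AL C N (S (int t)) * Ptop AL C N S t (Suc j)"
    by (simp add: assoc_mult_mat[of _ N N _ N _ N])
  finally show ?case .
qed (simp add: left_mult_one_mat[OF Amat_carrier] right_mult_one_mat[OF Amat_carrier])

lemma Psum_Suc_Suc:
  "Psum AL C N S (Suc t) (Suc j) = Amat AL C N (S (int t)) * Psum AL C N S t j + 1\<^sub>m N"
proof (induction j)
  case (Suc j)
  let ?A = "Amat AL C N (S (int t))"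
  have "Psum AL C N S (Suc t) (Suc (Suc j))
      = (?A * Psum AL C N S t j + 1\<^sub>m N) + ?A * Ptop AL C N S t j"
    by (simp only: Psum.simps(2)[of _ _ _ _ _ "Suc j"] Suc Ptop_Suc_Suc)
  also have "\<dots> = (?A * Psum AL C N S t j + ?A * Ptop AL C N S t j) + 1\<^sub>m N"
    by (intro add_mat_right_commute[of _ N N]) auto
  also have "?A * Psum AL C N S t j + ?A * Ptop AL C N S t j
      = ?A * Psum AL C N S t (Suc j)"
    by (simp add: mult_add_distrib_mat[of _ N N _ N])
  finally show ?case .
qed (simp add: right_mult_zero_mat[OF Amat_carrier])

lemma is_cycle_iterate:
  assumes x: "is_cycle AL C B \<mu> N S n x" and "k \<le> n" and "0 < n"
  shows "x (k mod n) = Mprod AL C N S k *\<^sub>v x 0 + Psum AL C N S k k *\<^sub>v (\<mu> \<cdot>\<^sub>v B)"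
  using \<open>k \<le> n\<close>
proof (induction k)
  case 0
  show ?case using is_cycle_carrier[OF x \<open>0 < n\<close>] B_carrier by simp
next
  case (Suc k)
  let ?A = "Amat AL C N (S (int k))" and ?M = "Mprod AL C N S k"
    and ?P = "Psum AL C N S k k" and ?b = "\<mu> \<cdot>\<^sub>v B"
  have x0: "x 0 \<in> carrier_vec N" using is_cycle_carrier[OF x \<open>0 < n\<close>] .
  have b: "?b \<in> carrier_vec N" using B_carrier by simp
  have "x (Suc k mod n) = ?A *\<^sub>v x k + ?b"
    using x Suc.prems unfolding is_cycle_def fpiece_def by auto
  also have "x k = ?M *\<^sub>v x 0 + ?P *\<^sub>v ?b" using Suc by simp
  also have "?A *\<^sub>v (?M *\<^sub>v x 0 + ?P *\<^sub>v ?b) = (?A * ?M) *\<^sub>v x 0 + (?A * ?P) *\<^sub>v ?b"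
    using x0 b by (simp add: mult_add_distrib_mat_vec[of _ N N])
  also have "\<dots> + ?b = (?A * ?M) *\<^sub>v x 0 + (?A * ?P + 1\<^sub>m N) *\<^sub>v ?b"
    using x0 b by (simp add: add_mult_distrib_mat_vec[of _ N N] assoc_add_vec[of _ N])
  finally show ?case by (simp only: Mprod.simps Psum_Suc_Suc)
qed

lemma Mmat_carrier [simp]: "Mmat AL C N S n \<in> carrier_mat N N"
  unfolding Mmat_def by simp

lemma Pmat_carrier [simp]: "Pmat AL C N S n \<in> carrier_mat N N"
  unfolding Pmat_def by simp

lemma is_cycle_fixed_point:
  assumes x: "is_cycle AL C B \<mu> N S n x" and "0 < n"
  shows "(1\<^sub>m N - Mmat AL C N S n) *\<^sub>v x 0 = Pmat AL C N S n *\<^sub>v (\<mu> \<cdot>\<^sub>v B)"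
proof -
  let ?M = "Mmat AL C N S n" and ?P = "Pmat AL C N S n" and ?b = "\<mu> \<cdot>\<^sub>v B"
  have x0: "x 0 \<in> carrier_vec N" using is_cycle_carrier[OF x \<open>0 < n\<close>] .
  have Pb: "?P *\<^sub>v ?b \<in> carrier_vec N" using B_carrier by simp
  have "x 0 = ?M *\<^sub>v x 0 + ?P *\<^sub>v ?b"
    using is_cycle_iterate[OF x order_refl \<open>0 < n\<close>] unfolding Mmat_def Pmat_def by simp
  then have "x 0 - ?M *\<^sub>v x 0 = (?M *\<^sub>v x 0 + ?P *\<^sub>v ?b) - ?M *\<^sub>v x 0"
    by (rule arg_cong)
  also have "\<dots> = ?P *\<^sub>v ?b"
    using x0 Pb by (simp add: add_minus_cancel_vec[of _ N])
  finally show ?thesis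
    using x0 by (simp add: minus_mult_distrib_mat_vec[of _ N N])
qed

lemma is_cycle_unique:
  assumes x: "is_cycle AL C B \<mu> N S n x" and x': "is_cycle AL C B \<mu> N S n x'"
    and det: "det (1\<^sub>m N - Mmat AL C N S n) \<noteq> 0" and "i < n"
  shows "x i = x' i"
proof -
  let ?K = "1\<^sub>m N - Mmat AL C N S n"
  have n: "0 < n" using \<open>i < n\<close> by simp
  have x0: "x 0 \<in> carrier_vec N" and x'0: "x' 0 \<in> carrier_vec N"
    using is_cycle_carrier[OF x n] is_cycle_carrier[OF x' n] .
  have K: "?K \<in> carrier_mat N N" using Mmat_carrier by (rule minus_carrier_mat)
  have "?K *\<^sub>v (x 0 - x' 0) = 0\<^sub>v N"
    using is_cycle_fixed_point[OF x n] is_cycle_fixed_point[OF x' n] x0 x'0 B_carrier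
    by (simp add: mult_minus_distrib_mat_vec[OF K])
  then have "x 0 - x' 0 = 0\<^sub>v N"
    using det det_0_iff_vec_prod_zero[OF K] minus_carrier_vec[OF x0 x'0] by blast
  then have "x 0 = x' 0"
    using x0 x'0 by (metis carrier_vecD eq_vecI index_minus_vec index_zero_vec right_minus_eq)
  then show ?thesis
    using is_cycle_iterate[OF x _ n, of i] is_cycle_iterate[OF x' _ n, of i] \<open>i < n\<close> by simp
qed

lemma one_minus_Mprod_mult_switching:
  assumes v: "v \<in> carrier_vec N" and v0: "v $ 0 = 0"
  shows "(1\<^sub>m N - Mprod AL C N S k) *\<^sub>v v = Psum AL C N S k k *\<^sub>v ((1\<^sub>m N - AL) *\<^sub>v v)"
proof (induction k)
  case 0
  have "(1\<^sub>m N - 1\<^sub>m N) *\<^sub>v v = 1\<^sub>m N *\<^sub>v v - 1\<^sub>m N *\<^sub>v v"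
    using v by (intro minus_mult_distrib_mat_vec) auto
  moreover have "(1\<^sub>m N - AL) *\<^sub>v v \<in> carrier_vec N"
    using v AL_carrier by (auto intro!: mult_mat_vec_carrier)
  ultimately show ?case using v by simp
next
  case (Suc k)
  let ?A = "Amat AL C N (S (int k))" and ?M = "Mprod AL C N S k" and ?P = "Psum AL C N S k k"
  have Av: "?A *\<^sub>v v = AL *\<^sub>v v" using Amat_mult_vec_switching[OF v v0] .
  have IH: "v - ?M *\<^sub>v v = ?P *\<^sub>v (v - AL *\<^sub>v v)"
    using Suc AL_carrier v by (simp add: minus_mult_distrib_mat_vec[of _ N N])
  have "(1\<^sub>m N - ?A * ?M) *\<^sub>v v = v - ?A *\<^sub>v (?M *\<^sub>v v)"
    using v by (simp add: minus_mult_distrib_mat_vec[of _ N N])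
  also have "\<dots> = (?A *\<^sub>v v - ?A *\<^sub>v (?M *\<^sub>v v)) + (v - AL *\<^sub>v v)"
    unfolding Av using v AL_carrier carrier_matD[OF Amat_carrier] by (intro eq_vecI) auto
  also have "?A *\<^sub>v v - ?A *\<^sub>v (?M *\<^sub>v v) = ?A *\<^sub>v (?P *\<^sub>v (v - AL *\<^sub>v v))"
    unfolding IH[symmetric] using v by (simp add: mult_minus_distrib_mat_vec[of _ N N])
  also have "?A *\<^sub>v (?P *\<^sub>v (v - AL *\<^sub>v v)) + (v - AL *\<^sub>v v)
      = (?A * ?P + 1\<^sub>m N) *\<^sub>v ((1\<^sub>m N - AL) *\<^sub>v v)"
    using v AL_carrier
    by (simp add: add_mult_distrib_mat_vec[of _ N N] minus_mult_distrib_mat_vec[of _ N N])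
  finally show ?case by (simp only: Mprod.simps Psum_Suc_Suc)
qed

lemma det_Pmat_eq_0_if_distinct_cycles:
  assumes "\<mu> \<noteq> 0" and "rhoT AL N \<bullet> B \<noteq> 0"
    and x: "is_cycle AL C B \<mu> N S n x" and x': "is_cycle AL C B \<mu> N S n x'"
    and "k < n" and "x k \<noteq> x' k"
  shows "det (Pmat AL C N S n) = 0"
proof (rule ccontr)
  let ?K = "1\<^sub>m N - Mmat AL C N S n" and ?P = "Pmat AL C N S n" and ?b = "\<mu> \<cdot>\<^sub>v B"
  assume "det ?P \<noteq> 0"
  define Q where "Q = (1 / det ?P) \<cdot>\<^sub>m adj_mat ?P"
  define X where "X = Q * ?K"
  have n: "0 < n" using \<open>k < n\<close> by simp
  have K: "?K \<in> carrier_mat N N" using Mmat_carrier by (rule minus_carrier_mat)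
  have Q: "Q \<in> carrier_mat N N" unfolding Q_def using adj_mat(1)[OF Pmat_carrier] by simp
  have X: "X \<in> carrier_mat N N" unfolding X_def using Q K by simp
  have QP: "Q * ?P = 1\<^sub>m N" unfolding Q_def using adj_mat_left_inverse[OF Pmat_carrier] \<open>det ?P \<noteq> 0\<close> .
  have X_mult: "X *\<^sub>v v = Q *\<^sub>v (?P *\<^sub>v w)" if "v \<in> carrier_vec N" "?K *\<^sub>v v = ?P *\<^sub>v w" for v w
    unfolding X_def using that Q K by simp
  have QP_mult: "Q *\<^sub>v (?P *\<^sub>v w) = w" if "w \<in> carrier_vec N" for w
    using assoc_mult_mat_vec[OF Q Pmat_carrier that, of S n] that by (simp add: QP)
  have "det ?K = 0"
    using is_cycle_unique[OF x x' _ \<open>k < n\<close>] \<open>x k \<noteq> x' k\<close> by blast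
  then have "det X = 0" unfolding X_def using det_mult[OF Q K] by simp
  moreover have "X *\<^sub>v v = (1\<^sub>m N - AL) *\<^sub>v v" if "v \<in> carrier_vec N" "v $ 0 = 0" for v
    using X_mult[OF that(1) one_minus_Mprod_mult_switching[OF that, folded Mmat_def Pmat_def]]
      QP_mult that minus_carrier_mat[OF AL_carrier] by simp
  then have "row (adj_mat X) 0 = rhoT AL N"
    unfolding rhoT_def using AL_carrier N_pos by (intro row_adj_mat_0_eqI[OF X]) auto
  moreover have "X *\<^sub>v x 0 = ?b"
    using X_mult[OF is_cycle_carrier[OF x n] is_cycle_fixed_point[OF x n]] QP_mult B_carrier by simp
  ultimately have "rhoT AL N \<bullet> ?b = 0"
    using row_adj_mat_scalar_prod_singular[OF X _ is_cycle_carrier[OF x n] N_pos] by metis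
  moreover have "dim_vec (rhoT AL N) = dim_vec B"
    unfolding rhoT_def using adj_mat(1)[OF minus_carrier_mat[OF AL_carrier]] B_carrier by auto
  ultimately show False using assms(1,2) by simp
qed

end

section \<open>Rotation sequences\<close>

definition symseq_periodic :: "nat \<Rightarrow> symseq \<Rightarrow> bool" where
  "symseq_periodic n S \<longleftrightarrow> (\<forall>i. S (i mod int n) = S i)"

lemma symseq_periodic_cong:
  "symseq_periodic n S \<Longrightarrow> i mod int n = j mod int n \<Longrightarrow> S i = S j"
  unfolding symseq_periodic_def by metis

lemma symseq_periodic_Fseq: "symseq_periodic n (Fseq l m n)"
  unfolding symseq_periodic_def Fseq_def by (simp add: mod_mult_left_eq)

lemma symseq_periodic_shiftS: "symseq_periodic n S \<Longrightarrow> symseq_periodic n (shiftS S a)"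
  unfolding symseq_periodic_def shiftS_def by (metis mod_add_left_eq)

lemma shiftS_shiftS: "shiftS (shiftS S a) b = shiftS S (a + b)"
  unfolding shiftS_def by (simp add: ac_simps)

lemma shiftS_mod: "symseq_periodic n S \<Longrightarrow> shiftS S (a mod int n) = shiftS S a"
  unfolding shiftS_def by (auto intro!: symseq_periodic_cong simp: mod_add_right_eq)

lemma is_cycle_rotate:
  assumes per: "symseq_periodic n S" and cyc: "is_cycle AL C B \<mu> N S n y"
  shows "is_cycle AL C B \<mu> N (shiftS S (int b)) n (\<lambda>k. y ((k + b) mod n))"
  unfolding is_cycle_def
proof (intro conjI allI impI)
  fix k assume k: "k < n"
  define j where "j = (k + b) mod n"
  have j: "j < n" using k j_def by simp
  show "y j \<in> carrier_vec N" using is_cycle_carrier[OF cyc j] .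
  have "((k + 1) mod n + b) mod n = (j + 1) mod n"
    unfolding j_def by (metis add.commute add.left_commute mod_add_left_eq)
  moreover have "S (int j) = shiftS S (int b) (int k)"
    unfolding shiftS_def j_def using per by (auto intro: symseq_periodic_cong simp: zmod_int)
  ultimately show "y (((k + 1) mod n + b) mod n) = fpiece AL C B \<mu> N (shiftS S (int b) (int k)) (y j)"
    using cyc j unfolding is_cycle_def by metis
qed

lemma inv_mod_spec:
  assumes "coprime m n" and "0 < m" and "1 < n"
  shows "inv_mod m n < n" and "(inv_mod m n * m) mod n = 1"
proof -
  obtain x y where "m * x = n * y + gcd m n" using bezout_nat[of m n] assms(2) by auto
  then have "m * x = n * y + 1" using assms(1) by simp
  then have "(x mod n * m) mod n = 1"
    by (metis assms(3) mod_mult_left_eq mult.commute mod_mult_self2 mod_less add.commute)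
  then have "\<exists>d. d < n \<and> (d * m) mod n = 1" using assms(3) by (intro exI[of _ "x mod n"]) auto
  then have "inv_mod m n < n \<and> (inv_mod m n * m) mod n = 1"
    unfolding inv_mod_def by (rule someI_ex)
  then show "inv_mod m n < n" and "(inv_mod m n * m) mod n = 1" by auto
qed

text \<open>Shifting by \<open>d\<close> lowers the rotation number \<open>i m mod n\<close> by one, which changes the symbol
  exactly when it passes \<open>0\<close> or \<open>\<ell>\<close>.\<close>
lemma Fseq_shift_inv_neq:
  assumes d: "(d * m) mod n = 1" and cop: "coprime m n" and "l < n"
    and i: "i < n" "i \<noteq> 0"
    and neq: "Fseq l m n (int i - int d) \<noteq> Fseq l m n (int i)"
  shows "i = (l * d) mod n"
proof -
  define r where "r = (int i * int m) mod int n"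
  have r: "0 \<le> r" "r < int n" unfolding r_def using i by auto
  have "r \<noteq> 0"
  proof
    assume "r = 0"
    then have "int n dvd int i * int m" unfolding r_def by auto
    then have "n dvd i * m" by (metis of_nat_dvd_iff of_nat_mult)
    then have "n dvd i" using cop by (metis coprime_commute coprime_dvd_mult_left_iff)
    then show False using i by auto
  qed
  have dm: "(int d * int m) mod int n = 1" using d by (metis of_nat_mod of_nat_mult of_nat_1)
  have "((int i - int d) * int m) mod int n = (int i * int m - int d * int m) mod int n"
    by (simp add: algebra_simps)
  also have "\<dots> = (r - 1) mod int n"
    unfolding r_def dm[symmetric] by (simp add: mod_diff_eq)
  also have "\<dots> = r - 1" using r \<open>r \<noteq> 0\<close> by simp
  finally have "r = int l"
    using neq \<open>l < n\<close> unfolding Fseq_def r_def[symmetric] by (auto split: if_splits)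
  have "int i mod int n = (int i * (int m * int d)) mod int n"
    by (metis dm mod_mult_right_eq mult.commute mult.right_neutral)
  also have "\<dots> = (r * int d) mod int n"
    unfolding r_def by (metis mod_mult_left_eq mult.assoc)
  finally have "int i mod int n = (int l * int d) mod int n" unfolding \<open>r = int l\<close> .
  then have "int i = int ((l * d) mod n)" using i by (simp add: zmod_int)
  then show ?thesis by simp
qed

text \<open>Invariance under rotation by \<open>d\<close> gives invariance under rotation by \<open>m d \<equiv> 1\<close>.\<close>
lemma rotation_invariant_step:
  fixes d m n k :: nat
  assumes d: "(d * m) mod n = 1" and inv: "\<forall>k<n. y k = y ((k + d) mod n)" and "k < n"
  shows "y k = y ((k + 1) mod n)"
proof -
  have iter: "y k = y ((k + j * d) mod n)" for j
  proof (induction j)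
    case (Suc j)
    have "(k + j * d) mod n < n" using \<open>k < n\<close> by simp
    then have "y ((k + j * d) mod n) = y (((k + j * d) mod n + d) mod n)"
      using inv by blast
    also have "((k + j * d) mod n + d) mod n = (k + j * d + d) mod n"
      by (rule mod_add_left_eq)
    finally show ?case using Suc by (simp add: ac_simps)
  qed (simp add: \<open>k < n\<close>)
  have "(k + m * d) mod n = (k + 1) mod n"
    using d by (metis mod_add_right_eq mult.commute)
  then show ?thesis using iter[of m] by simp
qed

section \<open>Shrinking points\<close>

locale shrinking_point_cycle = pwl_map +
  fixes \<mu> :: real and l m n :: nat and y :: "nat \<Rightarrow> real vec"
  assumes shrinking: "shrinking_point AL C B \<mu> N l m n"
    and cycle: "is_cycle AL C B \<mu> N (flipS (Fseq l m n) n 0) n y"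
begin

abbreviation S :: symseq where "S \<equiv> Fseq l m n"
abbreviation d :: nat where "d \<equiv> inv_mod m n"

lemma shrinking_point_conds:
  "0 < m" "m < n" "coprime m n" "2 \<le> l" "l + 2 \<le> n" "\<mu> \<noteq> 0" "rhoT AL N \<bullet> B \<noteq> 0"
  "det (1\<^sub>m N - Mmat AL C N (flipS S n 0) n) \<noteq> 0"
  using shrinking unfolding shrinking_point_def Let_def by auto

lemma n_gt_3: "3 < n"
  using shrinking_point_conds(4,5) by simp

lemma inv_mod_mult: "(d * m) mod n = 1"
  using inv_mod_spec shrinking_point_conds(1,3) n_gt_3 by simp

lemma cycle_first_coord_eq_0_iff:
  assumes "i < n"
  shows "y i $ 0 = 0 \<longleftrightarrow> i = 0 \<or> i = (l * d) mod n"
proof -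
  obtain y' where y': "is_cycle AL C B \<mu> N (flipS S n 0) n y'"
    and zeros: "\<forall>i<n. y' i $ 0 = 0 \<longleftrightarrow> (i mod n = 0 \<or> i mod n = (l * d) mod n)"
    using shrinking unfolding shrinking_point_def Let_def by auto
  have "y i = y' i" using is_cycle_unique[OF cycle y' shrinking_point_conds(8) assms] .
  then show ?thesis using zeros assms by simp
qed

lemma flipS_0_eq: "i < n \<Longrightarrow> i \<noteq> 0 \<Longrightarrow> flipS S n 0 (int i) = S (int i)"
  unfolding flipS_def by simp

lemma is_cycle_S: "is_cycle AL C B \<mu> N S n y"
proof (rule is_cycle_change_symbols[OF cycle])
  fix i assume "i < n" "S (int i) \<noteq> flipS S n 0 (int i)"
  then have "i = 0" using flipS_0_eq by metis
  then show "y i $ 0 = 0" using cycle_first_coord_eq_0_iff \<open>i < n\<close> by simp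
qed

lemma is_cycle_shift_inv: "is_cycle AL C B \<mu> N (shiftS S (- int d)) n y"
proof (rule is_cycle_change_symbols[OF cycle])
  fix i assume i: "i < n" and neq: "shiftS S (- int d) (int i) \<noteq> flipS S n 0 (int i)"
  show "y i $ 0 = 0"
  proof (cases "i = 0")
    case False
    then have "S (int i - int d) \<noteq> S (int i)"
      using neq flipS_0_eq[OF i] unfolding shiftS_def by simp
    then have "i = (l * d) mod n"
      using Fseq_shift_inv_neq[OF inv_mod_mult shrinking_point_conds(3) _ i False]
        shrinking_point_conds(5) by simp
    then show ?thesis using cycle_first_coord_eq_0_iff i by simp
  qed (use cycle_first_coord_eq_0_iff i in simp)
qed

lemma is_cycle_S_rotated: "is_cycle AL C B \<mu> N S n (\<lambda>k. y ((k + d) mod n))"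
  using is_cycle_rotate[OF symseq_periodic_shiftS[OF symseq_periodic_Fseq] is_cycle_shift_inv, of d]
  by (simp add: shiftS_shiftS shiftS_def)

lemma rotated_cycle_differs: "\<exists>k<n. y k \<noteq> y ((k + d) mod n)"
proof (rule ccontr)
  assume "\<not> ?thesis"
  then have step: "y k = y ((k + 1) mod n)" if "k < n" for k
    using rotation_invariant_step[OF inv_mod_mult _ that] by blast
  have "y 1 = y 0" and "y 2 = y 0"
    using step[of 0] step[of 1] n_gt_3 by (simp_all add: numeral_2_eq_2)
  then have "1 = (l * d) mod n" and "2 = (l * d) mod n"
    using cycle_first_coord_eq_0_iff[of 0] cycle_first_coord_eq_0_iff[of 1]
      cycle_first_coord_eq_0_iff[of 2] n_gt_3 by auto
  then show False by simp
qed

lemma det_one_minus_Mmat_S: "det (1\<^sub>m N - Mmat AL C N S n) = 0"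
  using rotated_cycle_differs is_cycle_unique[OF is_cycle_S is_cycle_S_rotated] by blast

lemma det_Pmat_shift: "det (Pmat AL C N (shiftS S i) n) = 0"
proof -
  obtain k where "k < n" and "y k \<noteq> y ((k + d) mod n)" using rotated_cycle_differs by blast
  define b where "b = nat (i mod int n)"
  have b: "int b = i mod int n" and "b < n" unfolding b_def using n_gt_3 by (simp_all add: nat_less_iff)
  define k' where "k' = (k + n - b) mod n"
  have "k' < n" and k': "(k' + b) mod n = k"
    unfolding k'_def using \<open>k < n\<close> \<open>b < n\<close> by (auto simp: mod_add_left_eq)
  have "shiftS S (int b) = shiftS S i" unfolding b using shiftS_mod[OF symseq_periodic_Fseq] .
  then show ?thesis
    using det_Pmat_eq_0_if_distinct_cycles[OF shrinking_point_conds(6,7)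
        is_cycle_rotate[OF symseq_periodic_Fseq is_cycle_S, of b]
        is_cycle_rotate[OF symseq_periodic_Fseq is_cycle_S_rotated, of b] \<open>k' < n\<close>]
      \<open>y k \<noteq> y ((k + d) mod n)\<close> k' by simp
qed

end

theorem proposition5p3:
  fixes AL :: "real mat" and C B :: "real vec" and \<mu> :: real and N l m n :: nat
    and y :: "nat \<Rightarrow> real vec"
  assumes "N \<ge> 2"
    and "AL \<in> carrier_mat N N" and "C \<in> carrier_vec N" and "B \<in> carrier_vec N"
    and "shrinking_point AL C B \<mu> N l m n"
    and "is_cycle AL C B \<mu> N (flipS (Fseq l m n) n 0) n y"
  shows "is_cycle AL C B \<mu> N (Fseq l m n) n y
       \<and> is_cycle AL C B \<mu> N (shiftS (Fseq l m n) (- int (inv_mod m n))) n y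
       \<and> det (1\<^sub>m N - Mmat AL C N (Fseq l m n) n) = 0
       \<and> (\<forall>i::int. det (Pmat AL C N (shiftS (Fseq l m n) i) n) = 0)"
proof -
  interpret shrinking_point_cycle AL C B N \<mu> l m n y
    using assms by unfold_locales auto
  show ?thesis
    using is_cycle_S is_cycle_shift_inv det_one_minus_Mmat_S det_Pmat_shift by blast
qed

end
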